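(* Let $X$ be a Tychonoff space with $|X|>1$ and $I\in\mathbb{A}(X)$. Then: (a) $\mathrm{ecc}(I)=3$ iff $\mathcal{O}(I)$ is not a singleton; (b) $\mathrm{ecc}(I)=2$ iff $\mathcal{O}(I)$ is a singleton and $|X|>2$; (c) $\mathrm{ecc}(I)=1$ iff $\mathcal{O}(I)$ is a singleton and $|X|=2$.
   Context: $C(X)$ denotes the ring of all real-valued continuous functions on $X$; $\mathrm{Coz}(f)=\{x: f(x)\neq 0\}$; for $S\subseteq C(X)$, $\mathcal{O}(S)=\bigcup_{f\in S}\mathrm{Coz}(f)$. $\mathbb{A}(X)$ is the set of nonzero ideals $I$ of $C(X)$ for which there is a nonzero ideal $J$ with $IJ=\{0\}$. $\mathbb{AG}(X)$ has vertex set $\mathbb{A}(X)$, distinct $I,J$ adjacent iff $IJ=\{0\}$. The eccentricity $\mathrm{ecc}(I)$ is the maximum of the distances $d(I,J)$ over vertices $J$. *)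

theory Defs
  imports "HOL-Analysis.Analysis" "HOL-Library.Extended_Nat"
begin

definition tychonoff_space :: "'a topology \<Rightarrow> bool" where
  "tychonoff_space X \<longleftrightarrow> completely_regular_space X \<and> t1_space X"

text \<open>C(X): real continuous functions on X, normalised to 0 off the carrier
  so that function equality is equality on X.\<close>
definition CX :: "'a topology \<Rightarrow> ('a \<Rightarrow> real) set" where
  "CX X = {f. continuous_map X euclideanreal f \<and> (\<forall>x. x \<notin> topspace X \<longrightarrow> f x = 0)}"

definition zeroF :: "'a \<Rightarrow> real" where "zeroF = (\<lambda>x. 0)"

definition is_ideal :: "'a topology \<Rightarrow> ('a \<Rightarrow> real) set \<Rightarrow> bool" where
  "is_ideal X I \<longleftrightarrow> I \<subseteq> CX X \<and> zeroF \<in> I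
     \<and> (\<forall>f\<in>I. \<forall>g\<in>I. (\<lambda>x. f x + g x) \<in> I)
     \<and> (\<forall>f\<in>I. \<forall>h\<in>CX X. (\<lambda>x. h x * f x) \<in> I)"

definition ideal_prod :: "'a topology \<Rightarrow> ('a \<Rightarrow> real) set \<Rightarrow> ('a \<Rightarrow> real) set \<Rightarrow> ('a \<Rightarrow> real) set" where
  "ideal_prod X I J = \<Inter>{K. is_ideal X K \<and> (\<forall>f\<in>I. \<forall>g\<in>J. (\<lambda>x. f x * g x) \<in> K)}"

definition AX :: "'a topology \<Rightarrow> ('a \<Rightarrow> real) set set" where
  "AX X = {I. is_ideal X I \<and> I \<noteq> {zeroF} \<and>
     (\<exists>J. is_ideal X J \<and> J \<noteq> {zeroF} \<and> ideal_prod X I J = {zeroF})}"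

definition adj :: "'a topology \<Rightarrow> ('a \<Rightarrow> real) set \<Rightarrow> ('a \<Rightarrow> real) set \<Rightarrow> bool" where
  "adj X I J \<longleftrightarrow> I \<in> AX X \<and> J \<in> AX X \<and> I \<noteq> J \<and> ideal_prod X I J = {zeroF}"

definition walk :: "'a topology \<Rightarrow> (nat \<Rightarrow> ('a \<Rightarrow> real) set) \<Rightarrow> nat \<Rightarrow> bool" where
  "walk X p n \<longleftrightarrow> (\<forall>i\<le>n. p i \<in> AX X) \<and> (\<forall>i<n. adj X (p i) (p (Suc i)))"

text \<open>Graph distance in AG(X) (infinity if no walk exists).\<close>
definition gdist :: "'a topology \<Rightarrow> ('a \<Rightarrow> real) set \<Rightarrow> ('a \<Rightarrow> real) set \<Rightarrow> enat" where
  "gdist X I J = (INF n \<in> {n. \<exists>p. walk X p n \<and> p 0 = I \<and> p n = J}. enat n)"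

definition ecc :: "'a topology \<Rightarrow> ('a \<Rightarrow> real) set \<Rightarrow> enat" where
  "ecc X I = (SUP J \<in> AX X. gdist X I J)"

definition Coz :: "'a topology \<Rightarrow> ('a \<Rightarrow> real) \<Rightarrow> 'a set" where
  "Coz X f = {x \<in> topspace X. f x \<noteq> 0}"

definition cozU :: "'a topology \<Rightarrow> ('a \<Rightarrow> real) set \<Rightarrow> 'a set" where
  "cozU X S = (\<Union>f\<in>S. Coz X f)"

end

theory Submission
  imports Defs
begin

text \<open>
  The graph only sees cozero sets: IJ = 0 iff the open sets O(I) and O(J) are disjoint, and
  every nonempty open U is O(C_U) for the ideal C_U = coz_ideal X U of functions with cozero
  set inside U.
  Choosing neighbours I' of I and J' of J, either I' and J' are adjacent or C_(O(I') \<inter> O(J'))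
  is a common neighbour of I and J, so every eccentricity is at most 3.  If O(I) = {x}, each
  vertex either misses x, and is adjacent to I, or has a neighbour that does; when X = {x, y}
  the only vertex containing x in its cozero set is I itself.  The lower bounds come from
  ideals C_U built by separating points with disjoint open sets.
\<close>

section \<open>Annihilating ideals and cozero sets\<close>

definition coz_ideal :: "'a topology \<Rightarrow> 'a set \<Rightarrow> ('a \<Rightarrow> real) set" where
  "coz_ideal X U = {f \<in> CX X. Coz X f \<subseteq> U}"

lemma openin_Coz: "f \<in> CX X \<Longrightarrow> openin X (Coz X f)"
  unfolding CX_def Coz_def
  using openin_continuous_map_preimage[of X euclideanreal f "-{0}"] by auto

lemma openin_cozU: "is_ideal X I \<Longrightarrow> openin X (cozU X I)"
  unfolding cozU_def is_ideal_def by (auto intro: openin_Union openin_Coz)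

lemma cozU_subset_topspace: "cozU X I \<subseteq> topspace X"
  by (auto simp: cozU_def Coz_def)

lemma is_ideal_zero: "is_ideal X {zeroF}"
  by (simp add: is_ideal_def CX_def zeroF_def)

lemma ideal_vanishes_outside_cozU:
  assumes "is_ideal X I" "f \<in> I" "x \<notin> cozU X I"
  shows "f x = 0"
  using assms by (auto simp: is_ideal_def CX_def cozU_def Coz_def)

lemma ideal_eq_zero_iff:
  assumes "is_ideal X I"
  shows "I = {zeroF} \<longleftrightarrow> cozU X I = {}"
proof -
  have "I = {zeroF} \<longleftrightarrow> (\<forall>f\<in>I. \<forall>x. f x = 0)"
    using assms by (auto simp: is_ideal_def zeroF_def fun_eq_iff)
  also have "\<dots> \<longleftrightarrow> cozU X I = {}"
  proof
    show "\<forall>f\<in>I. \<forall>x. f x = 0 \<Longrightarrow> cozU X I = {}"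
      by (auto simp: cozU_def Coz_def)
    show "cozU X I = {} \<Longrightarrow> \<forall>f\<in>I. \<forall>x. f x = 0"
      using ideal_vanishes_outside_cozU[OF assms] by blast
  qed
  finally show ?thesis .
qed

lemma ideal_prod_eq_zero_iff:
  assumes I: "is_ideal X I" and J: "is_ideal X J"
  shows "ideal_prod X I J = {zeroF} \<longleftrightarrow> cozU X I \<inter> cozU X J = {}"
proof
  assume prod: "ideal_prod X I J = {zeroF}"
  show "cozU X I \<inter> cozU X J = {}"
  proof (rule ccontr)
    assume "cozU X I \<inter> cozU X J \<noteq> {}"
    then obtain x f g where fg: "f \<in> I" "g \<in> J" "f x \<noteq> 0" "g x \<noteq> 0"
      by (auto simp: cozU_def Coz_def)
    then have "(\<lambda>x. f x * g x) \<in> ideal_prod X I J"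
      by (auto simp: ideal_prod_def)
    with prod fg show False
      by (auto simp: zeroF_def fun_eq_iff)
  qed
next
  assume disj: "cozU X I \<inter> cozU X J = {}"
  have "(\<lambda>x. f x * g x) = zeroF" if "f \<in> I" "g \<in> J" for f g
    using disj ideal_vanishes_outside_cozU[OF I \<open>f \<in> I\<close>] ideal_vanishes_outside_cozU[OF J \<open>g \<in> J\<close>]
    by (auto simp: zeroF_def fun_eq_iff)
  then have "ideal_prod X I J \<subseteq> {zeroF}"
    using is_ideal_zero unfolding ideal_prod_def by blast
  moreover have "zeroF \<in> ideal_prod X I J"
    by (simp add: ideal_prod_def is_ideal_def)
  ultimately show "ideal_prod X I J = {zeroF}"
    by blast
qed

lemma AX_iff:
  "I \<in> AX X \<longleftrightarrow> is_ideal X I \<and> cozU X I \<noteq> {} \<and>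
     (\<exists>J. is_ideal X J \<and> cozU X J \<noteq> {} \<and> cozU X I \<inter> cozU X J = {})"
  unfolding AX_def by (auto simp: ideal_eq_zero_iff ideal_prod_eq_zero_iff cong: conj_cong)

lemma adj_iff: "adj X I J \<longleftrightarrow> I \<in> AX X \<and> J \<in> AX X \<and> cozU X I \<inter> cozU X J = {}"
proof (cases "I \<in> AX X \<and> J \<in> AX X")
  case True
  then have "is_ideal X I" "is_ideal X J" "cozU X I \<noteq> {}"
    by (auto simp: AX_iff)
  then show ?thesis
    unfolding adj_def using ideal_prod_eq_zero_iff by auto
qed (auto simp: adj_def)

lemma AX_D:
  assumes "I \<in> AX X"
  shows "is_ideal X I" "cozU X I \<noteq> {}" "openin X (cozU X I)"
  using assms by (auto simp: AX_iff openin_cozU)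

lemma AX_if_adj:
  assumes "adj X I J"
  shows "I \<in> AX X" "J \<in> AX X"
  using assms by (simp_all add: adj_def)

lemma adj_sym: "adj X I J \<Longrightarrow> adj X J I"
  by (auto simp: adj_iff)

lemma AX_has_neighbour:
  assumes I: "I \<in> AX X"
  obtains J where "adj X I J"
proof -
  from I obtain J where J: "is_ideal X J" "cozU X J \<noteq> {}" "cozU X I \<inter> cozU X J = {}"
    by (auto simp: AX_iff)
  with I have "J \<in> AX X"
    by (auto simp: AX_iff)
  with I J(3) show thesis
    using that by (simp add: adj_iff)
qed

lemma is_ideal_coz_ideal: "is_ideal X (coz_ideal X U)"
proof -
  have "(\<lambda>x. f x + g x) \<in> coz_ideal X U" if "f \<in> coz_ideal X U" "g \<in> coz_ideal X U" for f g
  proof -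
    have "Coz X (\<lambda>x. f x + g x) \<subseteq> Coz X f \<union> Coz X g"
      by (force simp: Coz_def)
    with that show ?thesis
      by (auto simp: coz_ideal_def CX_def intro: continuous_map_add)
  qed
  moreover have "(\<lambda>x. h x * f x) \<in> coz_ideal X U" if "f \<in> coz_ideal X U" "h \<in> CX X" for f h
    using that by (auto simp: coz_ideal_def CX_def Coz_def intro: continuous_map_real_mult)
  ultimately show ?thesis
    by (auto simp: is_ideal_def coz_ideal_def CX_def Coz_def zeroF_def)
qed

lemma cozU_coz_ideal:
  assumes X: "completely_regular_space X" and U: "openin X U"
  shows "cozU X (coz_ideal X U) = U"
proof
  show "cozU X (coz_ideal X U) \<subseteq> U"
    by (auto simp: cozU_def coz_ideal_def)
  show "U \<subseteq> cozU X (coz_ideal X U)"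
  proof
    fix x assume "x \<in> U"
    then obtain g where g: "continuous_map X euclideanreal g" "g x = 1" "g ` (topspace X - U) \<subseteq> {0}"
      using X[unfolded completely_regular_space_gen_alt'[OF one_neq_zero], rule_format, OF U] by blast
    define f where "f y = (if y \<in> topspace X then g y else 0)" for y
    have "continuous_map X euclideanreal f"
      using g(1) by (rule continuous_map_eq) (simp add: f_def)
    then have "f \<in> coz_ideal X U"
      using g(3) by (auto simp: coz_ideal_def CX_def Coz_def f_def)
    moreover have "x \<in> Coz X f"
      using \<open>x \<in> U\<close> U g(2) openin_subset by (fastforce simp: Coz_def f_def)
    ultimately show "x \<in> cozU X (coz_ideal X U)"
      by (auto simp: cozU_def)
  qed
qed

lemma coz_ideal_in_AX:
  assumes "completely_regular_space X" "openin X U" "openin X W"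
    and "U \<noteq> {}" "W \<noteq> {}" "U \<inter> W = {}"
  shows "coz_ideal X U \<in> AX X"
proof -
  have "cozU X (coz_ideal X U) = U" "cozU X (coz_ideal X W) = W"
    using assms(1-3) by (simp_all add: cozU_coz_ideal)
  with assms(4-6) show ?thesis
    unfolding AX_iff by (blast intro: is_ideal_coz_ideal)
qed

lemma ideal_eq_coz_ideal_singleton:
  assumes I: "is_ideal X I" and x: "cozU X I = {x}"
  shows "I = coz_ideal X {x}"
proof
  show "I \<subseteq> coz_ideal X {x}"
    using I x by (auto simp: coz_ideal_def cozU_def is_ideal_def)
  show "coz_ideal X {x} \<subseteq> I"
  proof
    fix f assume f: "f \<in> coz_ideal X {x}"
    obtain g where g: "g \<in> I" "g x \<noteq> 0"
      using x by (auto simp: cozU_def Coz_def)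
    \<comment> \<open>both functions vanish off x, so f is a constant multiple of g\<close>
    let ?h = "\<lambda>y. inverse (g x) * f y"
    have "?h \<in> CX X"
      using f by (auto simp: coz_ideal_def CX_def intro: continuous_map_real_mult)
    then have "(\<lambda>y. ?h y * g y) \<in> I"
      using I g(1) by (simp add: is_ideal_def)
    moreover have "(\<lambda>y. ?h y * g y) = f"
    proof
      fix y
      show "?h y * g y = f y"
        using f g(2) by (cases "y = x") (auto simp: coz_ideal_def CX_def Coz_def)
    qed
    ultimately show "f \<in> I"
      by simp
  qed
qed

section \<open>Distances in the annihilating-ideal graph\<close>

lemma walk_0_iff: "walk X p 0 \<longleftrightarrow> p 0 \<in> AX X"
  by (simp add: walk_def)

lemma walk_Suc_iff: "walk X p (Suc n) \<longleftrightarrow> adj X (p 0) (p 1) \<and> walk X (\<lambda>i. p (Suc i)) n"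
  unfolding walk_def less_Suc_eq_le[symmetric] All_less_Suc2 by (auto simp: adj_iff)

lemma gdist_le_iff: "gdist X I J \<le> enat n \<longleftrightarrow> (\<exists>m\<le>n. \<exists>p. walk X p m \<and> p 0 = I \<and> p m = J)"
proof
  assume le: "gdist X I J \<le> enat n"
  let ?L = "{m. \<exists>p. walk X p m \<and> p 0 = I \<and> p m = J}"
  have "?L \<noteq> {}"
  proof
    assume "?L = {}"
    then have "gdist X I J = \<infinity>"
      unfolding gdist_def \<open>?L = {}\<close> by (simp add: top_enat_def)
    with le show False
      by simp
  qed
  then obtain k where "k \<in> ?L"
    by blast
  have "gdist X I J \<in> enat ` ?L"
    unfolding gdist_def by (intro wellorder_InfI[of "enat k"] imageI) fact
  then obtain m where "m \<in> ?L" "gdist X I J = enat m"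
    by blast
  with le show "\<exists>m\<le>n. \<exists>p. walk X p m \<and> p 0 = I \<and> p m = J"
    by auto
next
  assume "\<exists>m\<le>n. \<exists>p. walk X p m \<and> p 0 = I \<and> p m = J"
  then obtain m where "m \<le> n" "\<exists>p. walk X p m \<and> p 0 = I \<and> p m = J"
    by blast
  then show "gdist X I J \<le> enat n"
    unfolding gdist_def by (intro INF_lower2[of m]) auto
qed

lemma gdist_eq_0_iff: "gdist X I J = 0 \<longleftrightarrow> I = J \<and> I \<in> AX X"
proof -
  have "gdist X I J = 0 \<longleftrightarrow> gdist X I J \<le> enat 0"
    by (simp flip: zero_enat_def)
  then show ?thesis
    unfolding gdist_le_iff by (auto simp: walk_0_iff)
qed

lemma gdist_le_Suc_iff:
  "gdist X I J \<le> enat (Suc n) \<longleftrightarrow> I = J \<and> I \<in> AX X \<or> (\<exists>K. adj X I K \<and> gdist X K J \<le> enat n)"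
proof
  assume "gdist X I J \<le> enat (Suc n)"
  then obtain m p where p: "m \<le> Suc n" "walk X p m" "p 0 = I" "p m = J"
    by (auto simp: gdist_le_iff)
  show "I = J \<and> I \<in> AX X \<or> (\<exists>K. adj X I K \<and> gdist X K J \<le> enat n)"
  proof (cases m)
    case 0
    with p show ?thesis by (simp add: walk_0_iff)
  next
    case (Suc k)
    with p have "adj X I (p 1)" "gdist X (p 1) J \<le> enat n"
      by (auto simp: walk_Suc_iff gdist_le_iff)
    then show ?thesis by blast
  qed
next
  assume "I = J \<and> I \<in> AX X \<or> (\<exists>K. adj X I K \<and> gdist X K J \<le> enat n)"
  then show "gdist X I J \<le> enat (Suc n)"
  proof
    assume "I = J \<and> I \<in> AX X"
    then have "gdist X I J = 0"
      by (auto simp: gdist_eq_0_iff)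
    then show ?thesis
      by simp
  next
    assume "\<exists>K. adj X I K \<and> gdist X K J \<le> enat n"
    then obtain K m q where "adj X I K" "m \<le> n" "walk X q m" "q 0 = K" "q m = J"
      by (auto simp: gdist_le_iff)
    then have "walk X (case_nat I q) (Suc m)"
      by (simp add: walk_Suc_iff)
    with \<open>q m = J\<close> \<open>m \<le> n\<close> show ?thesis
      unfolding gdist_le_iff by fastforce
  qed
qed

lemma gdist_le_1_iff: "gdist X I J \<le> 1 \<longleftrightarrow> I = J \<and> I \<in> AX X \<or> adj X I J"
proof -
  have one: "(1::enat) = enat (Suc 0)"
    by (simp add: one_enat_def)
  show ?thesis
    unfolding one gdist_le_Suc_iff enat_0 ile0_eq gdist_eq_0_iff using AX_if_adj by blast
qed

lemma gdist_le_2_iff: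
  "gdist X I J \<le> 2 \<longleftrightarrow> I = J \<and> I \<in> AX X \<or> adj X I J \<or> (\<exists>K. adj X I K \<and> adj X K J)"
proof -
  have two: "(2::enat) = enat (Suc 1)"
    by (simp add: numeral_eq_enat)
  show ?thesis
    unfolding two gdist_le_Suc_iff enat_1 gdist_le_1_iff using AX_if_adj by blast
qed

lemma gdist_le_3I:
  assumes "adj X I K" "adj X K L" "adj X L J"
  shows "gdist X I J \<le> 3"
proof -
  have "gdist X K J \<le> 2"
    using assms(2,3) by (auto simp: gdist_le_2_iff)
  then have "gdist X K J \<le> enat 2"
    by (simp add: numeral_eq_enat)
  moreover have "(3::enat) = enat (Suc 2)"
    by (simp add: numeral_eq_enat)
  ultimately show ?thesis
    using assms(1) gdist_le_Suc_iff by metis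
qed

section \<open>Eccentricity\<close>

lemma tychonoff_imp_Hausdorff_space: "tychonoff_space X \<Longrightarrow> Hausdorff_space X"
  unfolding tychonoff_space_def
  using completely_regular_imp_regular_space regular_t1_imp_Hausdorff_space by blast

lemma gdist_le_3:
  assumes X: "completely_regular_space X" and I: "I \<in> AX X" and J: "J \<in> AX X"
  shows "gdist X I J \<le> 3"
proof -
  obtain I' where I': "adj X I I'"
    using AX_has_neighbour[OF I] .
  obtain J' where J': "adj X J J'"
    using AX_has_neighbour[OF J] .
  let ?U = "cozU X I' \<inter> cozU X J'"
  show ?thesis
  proof (cases "?U = {}")
    case True
    with I' J' have "adj X I' J'"
      by (simp add: adj_iff)
    then show ?thesis
      using gdist_le_3I[OF I' _ adj_sym[OF J']] by blast
  next
    case False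
    have "openin X ?U"
      using AX_D(3)[OF AX_if_adj(2)[OF I']] AX_D(3)[OF AX_if_adj(2)[OF J']] by (rule openin_Int)
    let ?K = "coz_ideal X ?U"
    have cozK: "cozU X ?K = ?U"
      using cozU_coz_ideal[OF X \<open>openin X ?U\<close>] .
    have "?U \<inter> cozU X I = {}"
      using I' by (auto simp: adj_iff)
    then have "?K \<in> AX X"
      using coz_ideal_in_AX[OF X \<open>openin X ?U\<close> AX_D(3)[OF I] False AX_D(2)[OF I]] by blast
    with I J I' J' cozK have "adj X I ?K" "adj X ?K J"
      by (auto simp: adj_iff)
    then have "gdist X I J \<le> 2"
      by (auto simp: gdist_le_2_iff)
    also have "(2::enat) \<le> 3"
      by (simp add: numeral_eq_enat)
    finally show ?thesis .
  qed
qed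

lemma gdist_le_2_if_cozU_singleton:
  assumes I: "I \<in> AX X" and x: "cozU X I = {x}" and J: "J \<in> AX X"
  shows "gdist X I J \<le> 2"
proof (cases "x \<in> cozU X J")
  case False
  with I J x have "adj X I J"
    by (simp add: adj_iff)
  then show ?thesis
    by (simp add: gdist_le_2_iff)
next
  case True
  obtain J' where J': "adj X J J'"
    using AX_has_neighbour[OF J] .
  with True x I have "adj X I J'"
    by (auto simp: adj_iff)
  with adj_sym[OF J'] show ?thesis
    by (auto simp: gdist_le_2_iff)
qed

lemma gdist_le_1_if_two_points:
  assumes I: "I \<in> AX X" and x: "cozU X I = {x}" and two_points: "topspace X = {x, y}"
    and J: "J \<in> AX X"
  shows "gdist X I J \<le> 1"
proof (cases "x \<in> cozU X J")
  case False
  with I J x have "adj X I J"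
    by (simp add: adj_iff)
  then show ?thesis
    by (simp add: gdist_le_1_iff)
next
  case True
  obtain J' where J': "adj X J J'"
    using AX_has_neighbour[OF J] .
  have disj: "cozU X J \<inter> cozU X J' = {}"
    using J' by (simp add: adj_iff)
  have "cozU X J \<subseteq> {x, y}" "cozU X J' \<subseteq> {x, y}"
    unfolding two_points[symmetric] by (rule cozU_subset_topspace)+
  moreover have "cozU X J' \<noteq> {}"
    using AX_D(2)[OF AX_if_adj(2)[OF J']] .
  ultimately have "cozU X J = {x}"
    using True disj by blast
  then have "J = I"
    using ideal_eq_coz_ideal_singleton[OF AX_D(1)[OF J]] ideal_eq_coz_ideal_singleton[OF AX_D(1)[OF I] x]
    by simp
  with J show ?thesis
    by (simp add: gdist_le_1_iff)
qed

lemma exists_gdist_gt_1: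
  assumes X: "completely_regular_space X" "Hausdorff_space X"
    and I: "I \<in> AX X" and x: "cozU X I = {x}"
    and yz: "y \<in> topspace X" "z \<in> topspace X" "y \<noteq> z" "x \<noteq> y" "x \<noteq> z"
  shows "\<exists>J\<in>AX X. \<not> gdist X I J \<le> 1"
proof -
  obtain V W where VW: "openin X V" "openin X W" "y \<in> V" "z \<in> W" "disjnt V W"
    using X(2) yz(1-3) unfolding Hausdorff_space_def by blast
  have "openin X {x}"
    using AX_D(3)[OF I] by (simp add: x)
  then have U: "openin X (insert x V)"
    using openin_Un[OF _ VW(1), of "{x}"] by simp
  have "closedin X {x}"
    using X(2) x cozU_subset_topspace[of X I] by (simp add: Hausdorff_imp_t1_space closedin_t1_singleton)
  with VW(2) have W: "openin X (W - {x})"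
    by (rule openin_diff)
  have "insert x V \<inter> (W - {x}) = {}"
    using VW(5) by (auto simp: disjnt_def)
  then have J: "coz_ideal X (insert x V) \<in> AX X"
    using coz_ideal_in_AX[OF X(1) U W] VW(4) yz(5) by blast
  have cozJ: "cozU X (coz_ideal X (insert x V)) = insert x V"
    using cozU_coz_ideal[OF X(1) U] .
  have "I \<noteq> coz_ideal X (insert x V)" "\<not> adj X I (coz_ideal X (insert x V))"
    using cozJ x VW(3) yz(4) by (auto simp: adj_iff)
  with J show ?thesis
    by (auto simp: gdist_le_1_iff)
qed

lemma closure_of_Un_exterior:
  assumes "A \<subseteq> S" "S \<subseteq> topspace X"
  shows "X closure_of (S \<union> (topspace X - X closure_of A)) = topspace X"
proof -
  let ?T = "S \<union> (topspace X - X closure_of A)"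
  have "X closure_of A \<subseteq> X closure_of ?T"
    using assms(1) by (intro closure_of_mono) blast
  moreover have "?T \<subseteq> X closure_of ?T"
    using assms(2) by (intro closure_of_subset) blast
  ultimately show ?thesis
    using closure_of_subset_topspace[of X ?T] by blast
qed

lemma no_common_neighbour_if_dense:
  assumes dense: "X closure_of (cozU X I \<union> cozU X J) = topspace X" and "adj X I K"
  shows "\<not> adj X K J"
proof
  assume "adj X K J"
  with \<open>adj X I K\<close> have "cozU X K \<inter> (cozU X I \<union> cozU X J) = {}" "K \<in> AX X"
    by (auto simp: adj_iff)
  then have "cozU X K \<inter> topspace X = {}"
    using openin_Int_closure_of_eq_empty[OF AX_D(3)] dense by metis
  with AX_D(2)[OF \<open>K \<in> AX X\<close>] cozU_subset_topspace[of X K] show False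
    by blast
qed

lemma exists_gdist_gt_2:
  assumes X: "completely_regular_space X" "Hausdorff_space X"
    and I: "I \<in> AX X" and ns: "\<nexists>x. cozU X I = {x}"
  shows "\<exists>J\<in>AX X. \<not> gdist X I J \<le> 2"
proof -
  obtain a b where ab: "a \<in> cozU X I" "b \<in> cozU X I" "a \<noteq> b"
    using AX_D(2)[OF I] ns by blast
  then obtain Va Vb where V: "openin X Va" "openin X Vb" "a \<in> Va" "b \<in> Vb" "Va \<inter> Vb = {}"
    using X(2) cozU_subset_topspace[of X I] unfolding Hausdorff_space_def disjnt_def by (metis subsetD)
  \<comment> \<open>J is supported on the exterior E of a neighbourhood A of b inside cozU I, so that
    cozU I \<union> cozU J is dense while a \<in> E keeps J non-adjacent to I\<close>
  define A where "A = Vb \<inter> cozU X I"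
  define E where "E = topspace X - X closure_of A"
  have "openin X A" "openin X E"
    using V(2) AX_D(3)[OF I] by (auto simp: A_def E_def)
  have "A \<subseteq> X closure_of A"
    by (simp add: A_def closure_of_subset cozU_subset_topspace le_infI2)
  then have "E \<inter> A = {}" "b \<notin> E"
    using V(4) ab(2) by (auto simp: E_def A_def)
  have "Va \<inter> X closure_of A = {}"
    using openin_Int_closure_of_eq_empty[OF V(1)] V(5) by (auto simp: A_def)
  then have "a \<in> E"
    using V(3) ab(1) cozU_subset_topspace[of X I] by (auto simp: E_def)
  have J: "coz_ideal X E \<in> AX X" and cozJ: "cozU X (coz_ideal X E) = E"
    using coz_ideal_in_AX[OF X(1) \<open>openin X E\<close> \<open>openin X A\<close>] \<open>E \<inter> A = {}\<close> \<open>a \<in> E\<close>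
      V(4) ab(2) cozU_coz_ideal[OF X(1) \<open>openin X E\<close>] by (auto simp: A_def)
  have "X closure_of (cozU X I \<union> E) = topspace X"
    unfolding E_def by (rule closure_of_Un_exterior) (auto simp: A_def cozU_subset_topspace)
  then have "\<not> (\<exists>K. adj X I K \<and> adj X K (coz_ideal X E))"
    using no_common_neighbour_if_dense cozJ by metis
  moreover have "I \<noteq> coz_ideal X E" "\<not> adj X I (coz_ideal X E)"
    using cozJ ab \<open>a \<in> E\<close> \<open>b \<notin> E\<close> by (auto simp: adj_iff)
  ultimately show ?thesis
    using J by (auto simp: gdist_le_2_iff)
qed

lemma ecc_le_iff: "ecc X I \<le> e \<longleftrightarrow> (\<forall>J\<in>AX X. gdist X I J \<le> e)"
  by (simp add: ecc_def SUP_le_iff)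

lemma ecc_eq_3:
  assumes X: "tychonoff_space X" and I: "I \<in> AX X" and ns: "\<nexists>x. cozU X I = {x}"
  shows "ecc X I = 3"
proof -
  have cr: "completely_regular_space X"
    using X by (simp add: tychonoff_space_def)
  have "ecc X I \<le> 3"
    using gdist_le_3[OF cr I] by (simp add: ecc_le_iff)
  moreover have "\<not> ecc X I \<le> 2"
    using exists_gdist_gt_2[OF cr tychonoff_imp_Hausdorff_space[OF X] I ns] by (simp add: ecc_le_iff)
  ultimately show ?thesis
    by (cases "ecc X I") (auto simp: numeral_eq_enat)
qed

lemma ecc_eq_2:
  assumes X: "tychonoff_space X" and I: "I \<in> AX X" and x: "cozU X I = {x}"
    and big: "infinite (topspace X) \<or> 2 < card (topspace X)"
  shows "ecc X I = 2"
proof -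
  have cr: "completely_regular_space X"
    using X by (simp add: tychonoff_space_def)
  have "x \<in> topspace X"
    using x cozU_subset_topspace[of X I] by blast
  have "topspace X \<noteq> {x}"
    using big by auto
  then obtain y where y: "y \<in> topspace X" "x \<noteq> y"
    using \<open>x \<in> topspace X\<close> by blast
  have "\<not> topspace X \<subseteq> {x, y}"
  proof
    assume sub: "topspace X \<subseteq> {x, y}"
    then have "finite (topspace X)" "card (topspace X) \<le> card {x, y}"
      by (simp_all add: finite_subset card_mono)
    with big y(2) show False
      by simp
  qed
  then obtain z where z: "z \<in> topspace X" "z \<noteq> x" "z \<noteq> y"
    by blast
  have "ecc X I \<le> 2"
    using gdist_le_2_if_cozU_singleton[OF I x] by (simp add: ecc_le_iff)
  moreover have "\<not> ecc X I \<le> 1"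
    using exists_gdist_gt_1[OF cr tychonoff_imp_Hausdorff_space[OF X] I x y(1) z(1)] y z
    by (simp add: ecc_le_iff)
  ultimately show ?thesis
    by (metis antisym not_le ileI1 one_add_one plus_1_eSuc(1))
qed

lemma ecc_eq_1:
  assumes I: "I \<in> AX X" and x: "cozU X I = {x}"
    and two: "finite (topspace X)" "card (topspace X) = 2"
  shows "ecc X I = 1"
proof -
  have "x \<in> topspace X"
    using x cozU_subset_topspace[of X I] by blast
  obtain u v where "topspace X = {u, v}"
    using two(2) unfolding card_2_iff by blast
  with \<open>x \<in> topspace X\<close> have "topspace X = {x, if x = u then v else u}"
    by auto
  then have "ecc X I \<le> 1"
    using gdist_le_1_if_two_points[OF I x] by (simp add: ecc_le_iff)
  moreover obtain J where "adj X I J"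
    using AX_has_neighbour[OF I] .
  then have "J \<in> AX X" "\<not> gdist X I J = 0"
    by (simp_all add: adj_def gdist_eq_0_iff)
  then have "\<not> ecc X I \<le> 0"
    using ecc_le_iff[of X I 0] by auto
  ultimately show ?thesis
    by (metis antisym not_le ileI1 one_eSuc)
qed

lemma infinite_or_card_gt_2_iff:
  assumes "u \<in> S" "v \<in> S" "u \<noteq> v"
  shows "infinite S \<or> card S > 2 \<longleftrightarrow> \<not> (finite S \<and> card S = 2)"
proof -
  have "card {u, v} \<le> card S" if "finite S"
    using assms that by (intro card_mono) auto
  with assms(3) show ?thesis
    by auto
qed

theorem mainTheorem10:
  fixes X :: "'a topology" and I :: "('a \<Rightarrow> real) set"
  assumes "tychonoff_space X"
    and "\<exists>x y. x \<in> topspace X \<and> y \<in> topspace X \<and> x \<noteq> y"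
    and "I \<in> AX X"
  shows "(ecc X I = 3 \<longleftrightarrow> \<not> (\<exists>x. cozU X I = {x}))
    \<and> (ecc X I = 2 \<longleftrightarrow> (\<exists>x. cozU X I = {x}) \<and> (infinite (topspace X) \<or> card (topspace X) > 2))
    \<and> (ecc X I = 1 \<longleftrightarrow> (\<exists>x. cozU X I = {x}) \<and> finite (topspace X) \<and> card (topspace X) = 2)"
proof -
  obtain u v where "u \<in> topspace X" "v \<in> topspace X" "u \<noteq> v"
    using assms(2) by blast
  then have card: "infinite (topspace X) \<or> card (topspace X) > 2 \<longleftrightarrow>
      \<not> (finite (topspace X) \<and> card (topspace X) = 2)"
    by (rule infinite_or_card_gt_2_iff)
  have distinct: "(1::enat) \<noteq> 2" "(1::enat) \<noteq> 3" "(2::enat) \<noteq> 3"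
    by (simp_all add: numeral_eq_enat enat_1_iff)
  consider "\<nexists>x. cozU X I = {x}"
    | x where "cozU X I = {x}" "finite (topspace X) \<and> card (topspace X) = 2"
    | x where "cozU X I = {x}" "\<not> (finite (topspace X) \<and> card (topspace X) = 2)"
    by blast
  then show ?thesis
  proof cases
    case 1
    then show ?thesis
      using ecc_eq_3[OF assms(1,3)] distinct by auto
  next
    case (2 x)
    then have "ecc X I = 1"
      using ecc_eq_1[OF assms(3)] by blast
    with 2 show ?thesis
      using distinct by auto
  next
    case (3 x)
    then show ?thesis
      using ecc_eq_2[OF assms(1,3) 3(1)] card distinct by auto
  qed
qed

end
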